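(* Let $\gamma\in\{\tfrac12,1,\dots\}$, $j\in\{-\tfrac12,0,\tfrac12,\dots\}$ with $j>\gamma-1$, and let $|\psi_{(\mu)}\rangle\in F_\gamma\otimes D^+_j$, $\mu\in\{-\gamma,\dots,\gamma\}$, be the vectors $$|\psi_{(\mu)}\rangle=\sum_{\nu=-\gamma}^{\mu}(-1)^{\gamma+\nu}\prod_{\sigma=-\gamma}^{\nu-1}\frac{\Gamma_+(j,j+\mu-\sigma)}{\Gamma_+(\gamma,\sigma)}\,|\gamma,\nu\rangle\otimes|j,j+1+\mu-\nu\rangle.$$ Then $(J_+)^n|\psi_{(\mu)}\rangle\neq0$ for every $n\in\mathbb N$ and every $\mu$.
   Context: Let $\mathfrak{spin}(2,1)_{\mathbb C}$ have basis $J_0,J_+,J_-$ with $[J_0,J_\pm]=\pm J_\pm$, $[J_+,J_-]=-2J_0$, and Casimir $Q=-J_0(J_0-1)+J_+J_-=-J_0(J_0+1)+J_-J_+$. Set $\Gamma_\pm(j,m)=\mathrm i\sqrt{j\mp m}\,\sqrt{j\pm m+1}$. A module with basis $\{|j,m\rangle\}$ has action $J_0|j,m\rangle=m|j,m\rangle$, $J_\pm|j,m\rangle=\Gamma_\pm(j,m)|j,m\pm1\rangle$. The positive discrete series module $D^+_j$ has basis $|j,m\rangle$, $m\in\{j+1,j+2,\dots\}$; the finite-dimensional module $F_\gamma$ has basis $|\gamma,\mu\rangle$, $\mu\in\{-\gamma,\dots,\gamma\}$. On a tensor product the generators act as $J_0\otimes1+1\otimes J_0$, $J_\pm\otimes1+1\otimes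 J_\pm$. *)

theory Defs
  imports Complex_Main
begin

text \<open>Gamma_+(j,m) = i * sqrt(j - m) * sqrt(j + m + 1), with the principal complex
  square root (so sqrt of a negative real x is i*sqrt(-x)).\<close>
definition Gp :: "real \<Rightarrow> real \<Rightarrow> complex" where
  "Gp j m = \<i> * csqrt (complex_of_real (j - m)) * csqrt (complex_of_real (j + m + 1))"

text \<open>Vectors of F_gamma (x) D^+_j are represented by their coefficient functions
  (nu, m) \<mapsto> coefficient of |gamma,nu> (x) |j,m>.  The basis vector |gamma,nu> (x) |j,m>:\<close>
definition ket :: "real \<Rightarrow> real \<Rightarrow> real \<times> real \<Rightarrow> complex" where
  "ket nu m = (\<lambda>p. if p = (nu, m) then 1 else 0)"

text \<open>Action of J_+ (x) 1 + 1 (x) J_+ in coordinates: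
  J_+ |gamma,nu>|j,m> = Gp gamma nu |gamma,nu+1>|j,m> + Gp j m |gamma,nu>|j,m+1>.\<close>
definition Jplus :: "real \<Rightarrow> real \<Rightarrow> (real \<times> real \<Rightarrow> complex) \<Rightarrow> (real \<times> real \<Rightarrow> complex)" where
  "Jplus gamma j v = (\<lambda>(nu, m). Gp gamma (nu - 1) * v (nu - 1, m) + Gp j (m - 1) * v (nu, m - 1))"

text \<open>The vectors psi_(mu); the summation index nu = -gamma + t, t = 0 .. mu + gamma,
  so (-1)^(gamma+nu) = (-1)^t; the product index sigma = -gamma + s, s = 0 .. t-1.\<close>
definition psi :: "real \<Rightarrow> real \<Rightarrow> real \<Rightarrow> (real \<times> real \<Rightarrow> complex)" where
  "psi gamma j mu = (\<lambda>p. \<Sum>t\<in>{0..nat \<lfloor>mu + gamma\<rfloor>}.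
      (-1) ^ t * (\<Prod>s\<in>{0..<t}. Gp j (j + mu - (- gamma + real s)) / Gp gamma (- gamma + real s))
      * ket (- gamma + real t) (j + 1 + mu - (- gamma + real t)) p)"

end

theory Submission
  imports Defs
begin

text \<open>Only the component along \<open>|\<gamma>,-\<gamma>\<rangle>\<close> needs to be followed. Since \<open>\<Gamma>\<^sub>+(\<gamma>,-\<gamma>-1) = 0\<close>,
  \<open>J\<^sub>+\<close> never feeds this component from \<open>\<nu> = -\<gamma>-1\<close>, so \<open>n\<close> applications of \<open>J\<^sub>+\<close> merely
  multiply its coefficient by \<open>\<Gamma>\<^sub>+(j,m)\<Gamma>\<^sub>+(j,m+1)\<cdots>\<Gamma>\<^sub>+(j,m+n-1)\<close>. In \<open>\<psi>\<^sub>\<mu>\<close> this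
  component is \<open>|\<gamma>,-\<gamma>\<rangle> \<otimes> |j,j+1+\<mu>+\<gamma>\<rangle>\<close> with coefficient 1, and \<open>\<Gamma>\<^sub>+(j,m)\<close> vanishes only at
  \<open>m = j\<close> and \<open>m = -j-1\<close>, both below \<open>j+1\<close> when \<open>j > -1\<close>.\<close>

lemma Gp_lowest_weight_eq_0: "Gp g (- g - 1) = 0"
  unfolding Gp_def by simp

lemma Gp_nonzero:
  assumes "j - m \<noteq> 0" "j + m + 1 \<noteq> 0"
  shows "Gp j m \<noteq> 0"
proof -
  have "complex_of_real (j - m) \<noteq> 0" "complex_of_real (j + m + 1) \<noteq> 0"
    using assms by (simp_all only: of_real_eq_0_iff not_False_eq_True)
  then show ?thesis unfolding Gp_def by (simp del: of_real_add of_real_diff)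
qed

lemma Gp_nonzero_above:
  assumes "j > -1" "m \<ge> j + 1"
  shows "Gp j m \<noteq> 0"
proof (rule Gp_nonzero)
  show "j - m \<noteq> 0" "j + m + 1 \<noteq> 0"
    using assms by linarith+
qed

lemma funpow_Jplus_lowest:
  "(Jplus g j ^^ n) v (- g, m + real n) = (\<Prod>i<n. Gp j (m + real i)) * v (- g, m)"
proof (induction n)
  case 0
  then show ?case by simp
next
  case (Suc n)
  have "(Jplus g j ^^ Suc n) v (- g, m + real (Suc n))
      = Gp g (- g - 1) * (Jplus g j ^^ n) v (- g - 1, m + real (Suc n))
        + Gp j (m + real n) * (Jplus g j ^^ n) v (- g, m + real n)"
    by (simp add: Jplus_def algebra_simps)
  also have "\<dots> = Gp j (m + real n) * ((\<Prod>i<n. Gp j (m + real i)) * v (- g, m))"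
    using Suc by (simp add: Gp_lowest_weight_eq_0)
  finally show ?case by (simp add: ac_simps)
qed

lemma psi_lowest_coeff: "psi g j mu (- g, j + 1 + mu + g) = 1"
proof -
  have "psi g j mu (- g, j + 1 + mu + g) = (\<Sum>t\<in>{0..nat \<lfloor>mu + g\<rfloor>}. if t = 0 then 1 else 0)"
    unfolding psi_def
    by (rule sum.cong[OF refl]) (auto simp: ket_def)
  then show ?thesis by simp
qed

theorem mainTheorem4:
  fixes gamma j mu :: real and k l a :: nat
  assumes "k \<ge> 1" and "gamma = real k / 2"
    and "j = (real l - 1) / 2"
    and "j > gamma - 1"
    and "a \<le> k" and "mu = - gamma + real a"
  shows "\<forall>n::nat. (Jplus gamma j ^^ n) (psi gamma j mu) \<noteq> (\<lambda>_. 0)"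
proof
  fix n :: nat
  define m where "m = j + 1 + mu + gamma"
  have "j > -1" "mu + gamma \<ge> 0"
    using assms by auto
  then have "Gp j (m + real i) \<noteq> 0" for i
    by (intro Gp_nonzero_above) (auto simp: m_def)
  then have "(Jplus gamma j ^^ n) (psi gamma j mu) (- gamma, m + real n) \<noteq> 0"
    by (simp add: funpow_Jplus_lowest psi_lowest_coeff m_def)
  then show "(Jplus gamma j ^^ n) (psi gamma j mu) \<noteq> (\<lambda>_. 0)"
    by auto
qed

end
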